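(* Let $n\ge 2$ and $w\in\widetilde{S}_n^\circ$ with gap vector $\dot g(w)=(g_1,\dots,g_{n-1})$. Then the Coxeter length of $w$ is \[\ell(w)=\sum_{i=1}^{n-1}(n-i)\,g_i = g_{n-1}+2g_{n-2}+\cdots+(n-1)g_1 .\]
   Context: An affine permutation of size $n$ is a bijection $w:\mathbb{Z}\to\mathbb{Z}$ with $w(i+n)=w(i)+n$ for all $i$ and $w(1)+\cdots+w(n)=\binom{n+1}{2}$; $[w(1),\dots,w(n)]$ is its base window. The affine symmetric group $\widetilde{S}_n$ is the group of these under composition. It is generated by $s_0,\dots,s_{n-1}$, where $ws_i$ is obtained from $w$ by swapping the values at positions $i+mn$ and $i+1+mn$ for every $m\in\mathbb{Z}$; the Coxeter length $\ell(w)$ is the minimal number of such generators in a factorization of $w$. Let $\widetilde{S}_n^\circ$ be the set of $w\in\widetilde{S}_n$ with $w(1)<w(2)<\cdots<w(n)$ (minimal length coset representatives). For $w\in\widetilde{S}_n^\circ$ with base window $w_1<\cdots<w_n$, call an integer a bead if it equals $w_j-mn$ for some $1\le j\le n$ and some integer $m\ge 0$, and a gap otherwise. The gap vector is $\dot g(w)=(g_1,\dots,g_{n-1})$, where $g_i$ is the number of gaps strictly between $w_i$ and $w_{i+1}$. *)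

theory Defs
  imports Main
begin

definition affine_perm :: "nat \<Rightarrow> (int \<Rightarrow> int) \<Rightarrow> bool" where
  "affine_perm n w \<longleftrightarrow> bij w \<and> (\<forall>i. w (i + int n) = w i + int n)
     \<and> (\<Sum>i\<in>{1..int n}. w i) = int ((n + 1) choose 2)"

definition affine_gen :: "nat \<Rightarrow> nat \<Rightarrow> int \<Rightarrow> int" where
  "affine_gen n i = (\<lambda>j. if j mod int n = int i mod int n then j + 1
                         else if j mod int n = (int i + 1) mod int n then j - 1
                         else j)"

definition gen_word :: "nat \<Rightarrow> nat list \<Rightarrow> int \<Rightarrow> int" where
  "gen_word n is = foldr (\<lambda>i f. affine_gen n i \<circ> f) is id"

definition coxeter_length :: "nat \<Rightarrow> (int \<Rightarrow> int) \<Rightarrow> nat" where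
  "coxeter_length n w = (LEAST k. \<exists>is. length is = k \<and> set is \<subseteq> {0..<n} \<and> gen_word n is = w)"

text \<open>Minimal length coset representatives: increasing base window.\<close>
definition affine_grass :: "nat \<Rightarrow> (int \<Rightarrow> int) \<Rightarrow> bool" where
  "affine_grass n w \<longleftrightarrow> affine_perm n w \<and> (\<forall>i\<in>{1..<int n}. w i < w (i + 1))"

definition is_bead :: "nat \<Rightarrow> (int \<Rightarrow> int) \<Rightarrow> int \<Rightarrow> bool" where
  "is_bead n w x \<longleftrightarrow> (\<exists>j\<in>{1..int n}. \<exists>m::int. m \<ge> 0 \<and> x = w j - m * int n)"

definition gap_count :: "nat \<Rightarrow> (int \<Rightarrow> int) \<Rightarrow> nat \<Rightarrow> nat" where
  "gap_count n w i = card {x. w (int i) < x \<and> x < w (int i + 1) \<and> \<not> is_bead n w x}"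

end

theory Submission
  imports Defs
begin

text \<open>
  The length is computed by Shi's formula
  \<open>\<ell>(w) = \<Sum>\<^sub>1\<^sub>\<le>\<^sub>i\<^sub><\<^sub>j\<^sub>\<le>\<^sub>n \<bar>\<lfloor>(w j - w i) / n\<rfloor>\<bar>\<close>.
  Right multiplication by a generator swaps two adjacent window entries (for \<open>s\<^sub>0\<close> after shifting
  positions by one, which turns it into \<open>s\<^sub>n\<^sub>-\<^sub>1\<close>) and changes the right-hand side by exactly
  \<open>\<plusminus>1\<close>, by \<open>-1\<close> precisely at a descent. So the sum bounds the length from below. It is
  attained: while the sum is positive there is a descent, and once it is zero the window consists of
  consecutive integers, which for an affine permutation forces the identity.

  For an increasing window the term of \<open>i < j\<close> is \<open>(w j - w i) div n\<close>, the number of gaps between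
  \<open>w i\<close> and \<open>w j\<close> congruent to \<open>w i\<close> modulo \<open>n\<close>. Every gap between \<open>w 1\<close> and \<open>w j\<close> arises in
  this way for exactly one \<open>i < j\<close>, so the \<open>j\<close>-th column sums to \<open>g\<^sub>1 + \<dots> + g\<^sub>j\<^sub>-\<^sub>1\<close>, and
  summing over \<open>j\<close> gives \<open>\<Sum>\<^sub>i (n - i) g\<^sub>i\<close>.
\<close>

section \<open>Periodic injections and the generators\<close>

definition periodic_inj :: "nat \<Rightarrow> (int \<Rightarrow> int) \<Rightarrow> bool" where
  "periodic_inj n w \<longleftrightarrow> inj w \<and> (\<forall>i. w (i + int n) = w i + int n)"

lemma periodic_add_mult:
  assumes "\<forall>i. w (i + int n) = w i + int n"
  shows "w (i + m * int n) = w i + m * int n"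
proof (induct m rule: int_induct[where k = 0])
  case (step1 m)
  have "w (i + (m + 1) * int n) = w ((i + m * int n) + int n)" by (simp add: algebra_simps)
  also have "\<dots> = w (i + m * int n) + int n" using assms by blast
  also have "\<dots> = w i + (m + 1) * int n" using step1 by (simp add: algebra_simps)
  finally show ?case .
next
  case (step2 m)
  have "w (i + m * int n) = w ((i + (m - 1) * int n) + int n)" by (simp add: algebra_simps)
  also have "\<dots> = w (i + (m - 1) * int n) + int n" using assms by blast
  finally show ?case using step2 by (simp add: algebra_simps)
qed simp

lemma window_decomposition:
  assumes "n > 0"
  obtains r m where "r \<in> {1..int n}" "y = r + m * int n"
proof
  have "0 \<le> (y - 1) mod int n" "(y - 1) mod int n < int n" using assms by simp_all
  then show "(y - 1) mod int n + 1 \<in> {1..int n}" by simp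
  show "y = ((y - 1) mod int n + 1) + (y - 1) div int n * int n"
    by (simp add: mod_div_mult_eq algebra_simps)
qed

lemma periodic_inj_window_not_dvd:
  assumes "periodic_inj n w" "i \<in> {1..int n}" "j \<in> {1..int n}" "i \<noteq> j"
  shows "\<not> int n dvd (w j - w i)"
proof
  assume "int n dvd (w j - w i)"
  then obtain m where m: "w j = w i + m * int n" by (auto simp: dvd_def algebra_simps)
  have "w (i + m * int n) = w j"
    using assms(1) periodic_add_mult m unfolding periodic_inj_def by metis
  then have "j - i = m * int n" using assms(1) unfolding periodic_inj_def inj_def by force
  moreover have "\<bar>j - i\<bar> < int n" using assms(2,3) by auto
  ultimately have "m = 0" using assms(2) by (auto simp: abs_mult)
  then show False using \<open>j - i = m * int n\<close> assms(4) by simp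
qed

lemma periodic_inj_values_around_window:
  assumes "periodic_inj n w"
  shows "w (int n + 1) = w 1 + int n" "w (int n) = w 0 + int n"
  using assms unfolding periodic_inj_def by (metis add.commute, metis add_0)

lemma affine_gen_add_period: "affine_gen n k (j + int n) = affine_gen n k j + int n"
  unfolding affine_gen_def by auto

lemma affine_gen_involution:
  assumes "n \<ge> 2" "k < n"
  shows "affine_gen n k (affine_gen n k j) = j"
proof -
  let ?N = "int n"
  have ne: "(int k + 1) mod ?N \<noteq> int k mod ?N"
    using assms by (cases "int k + 1 = ?N") auto
  have up: "(j + 1) mod ?N = (j mod ?N + 1) mod ?N" and down: "(j - 1) mod ?N = (j mod ?N - 1) mod ?N"
    by (simp_all add: mod_simps)
  consider "j mod ?N = int k mod ?N" | "j mod ?N = (int k + 1) mod ?N"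
    | "j mod ?N \<noteq> int k mod ?N" "j mod ?N \<noteq> (int k + 1) mod ?N"
    by blast
  then show ?thesis
  proof cases
    case 1
    then have "(j + 1) mod ?N = (int k + 1) mod ?N" using up by (simp add: mod_simps)
    then show ?thesis using 1 ne unfolding affine_gen_def by auto
  next
    case 2
    then have "(j - 1) mod ?N = int k mod ?N" using down by (simp add: mod_simps)
    then show ?thesis using 2 ne unfolding affine_gen_def by auto
  next
    case 3
    then show ?thesis unfolding affine_gen_def by auto
  qed
qed

lemma inj_affine_gen: "n \<ge> 2 \<Longrightarrow> k < n \<Longrightarrow> inj (affine_gen n k)"
  by (metis affine_gen_involution injI)

lemma periodic_inj_comp_affine_gen:
  "n \<ge> 2 \<Longrightarrow> k < n \<Longrightarrow> periodic_inj n w \<Longrightarrow> periodic_inj n (w \<circ> affine_gen n k)"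
  unfolding periodic_inj_def by (auto simp: affine_gen_add_period inj_compose inj_affine_gen)

lemma gen_word_snoc: "gen_word n (ks @ [k]) = gen_word n ks \<circ> affine_gen n k"
proof -
  have "foldr (\<lambda>i f. affine_gen n i \<circ> f) ks g = gen_word n ks \<circ> g" for g :: "int \<Rightarrow> int"
    unfolding gen_word_def by (induct ks) (auto simp: comp_assoc)
  from this[of "affine_gen n k"] show ?thesis unfolding gen_word_def by simp
qed

lemma periodic_inj_gen_word:
  assumes "n \<ge> 2" "set ks \<subseteq> {0..<n}"
  shows "periodic_inj n (gen_word n ks)"
  using assms(2)
proof (induct ks rule: rev_induct)
  case Nil
  then show ?case by (simp add: gen_word_def periodic_inj_def)
next
  case (snoc k ks)
  then show ?case
    using periodic_inj_comp_affine_gen[OF assms(1)] by (simp add: gen_word_snoc del: comp_apply)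
qed

lemma affine_gen_window:
  assumes "n \<ge> 2" "1 \<le> k" "k < n" "i \<in> {1..int n}"
  shows "affine_gen n k i = (if i = int k then i + 1 else if i = int k + 1 then i - 1 else i)"
proof -
  have mods: "i mod int n = (if i = int n then 0 else i)" "int k mod int n = int k"
    "(int k + 1) mod int n = (if int k + 1 = int n then 0 else int k + 1)"
    using assms by auto
  show ?thesis unfolding affine_gen_def mods using assms by auto
qed

lemma affine_gen_window_image:
  assumes "n \<ge> 2" "1 \<le> k" "k < n"
  shows "affine_gen n k ` {1..int n} = {1..int n}"
proof -
  have into: "affine_gen n k ` {1..int n} \<subseteq> {1..int n}"
    using affine_gen_window[OF assms] assms by auto
  moreover have "{1..int n} \<subseteq> affine_gen n k ` {1..int n}"
  proof
    fix i assume "i \<in> {1..int n}"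
    then show "i \<in> affine_gen n k ` {1..int n}"
      using into affine_gen_involution[OF assms(1,3), of i] by (metis image_eqI image_subset_iff)
  qed
  ultimately show ?thesis by blast
qed

text \<open>Conjugating by the shift of positions turns \<open>s\<^sub>0\<close> into \<open>s\<^sub>n\<^sub>-\<^sub>1\<close>; this reduces
  everything about \<open>s\<^sub>0\<close> to the generators acting inside the window.\<close>

lemma affine_gen_zero_shift:
  assumes "n \<ge> 2"
  shows "affine_gen n 0 (j + 1) = affine_gen n (n - 1) j + 1"
proof -
  define r where "r = j mod int n"
  have r: "0 \<le> r" "r < int n" using assms unfolding r_def by simp_all
  have succ: "(j + 1) mod int n = (if r = int n - 1 then 0 else r + 1)"
  proof -
    have "(j + 1) mod int n = (r + 1) mod int n" unfolding r_def by (simp add: mod_simps)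
    then show ?thesis using r by auto
  qed
  have k: "int (n - 1) = int n - 1" using assms by simp
  have last: "int (n - 1) mod int n = int n - 1" "(int (n - 1) + 1) mod int n = 0"
  proof -
    show "int (n - 1) mod int n = int n - 1"
      unfolding k using assms by (intro mod_pos_pos_trivial) auto
    show "(int (n - 1) + 1) mod int n = 0" unfolding k by simp
  qed
  show ?thesis
    unfolding affine_gen_def last succ r_def[symmetric] using assms r by auto
qed

lemma comp_affine_gen_zero_shift:
  assumes "n \<ge> 2"
  shows "(\<lambda>i. (w \<circ> affine_gen n 0) (i + 1)) = (\<lambda>i. w (i + 1)) \<circ> affine_gen n (n - 1)"
  using affine_gen_zero_shift[OF assms] by auto

lemma periodic_inj_shift: "periodic_inj n w \<Longrightarrow> periodic_inj n (\<lambda>i. w (i + 1))"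
  unfolding periodic_inj_def inj_def by (metis add.commute add.left_commute add_right_cancel)

definition window_sum :: "nat \<Rightarrow> (int \<Rightarrow> int) \<Rightarrow> int" where
  "window_sum n w = (\<Sum>i\<in>{1..int n}. w i)"

lemma window_sum_comp_affine_gen_window:
  assumes "n \<ge> 2" "1 \<le> k" "k < n"
  shows "window_sum n (w \<circ> affine_gen n k) = window_sum n w"
proof -
  have "inj_on (affine_gen n k) {1..int n}"
    using inj_affine_gen[OF assms(1,3)] inj_on_subset by blast
  from sum.reindex[OF this, of w] show ?thesis
    unfolding window_sum_def affine_gen_window_image[OF assms] by simp
qed

lemma window_sum_shift:
  assumes "n > 0" "\<forall>i. w (i + int n) = w i + int n"
  shows "window_sum n (\<lambda>i. w (i + 1)) = window_sum n w + int n"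
proof -
  have "window_sum n (\<lambda>i. w (i + 1)) = (\<Sum>i\<in>{2..int n + 1}. w i)"
    unfolding window_sum_def
    by (rule sum.reindex_bij_witness[where i = "\<lambda>i. i - 1" and j = "\<lambda>i. i + 1"]) auto
  also have "\<dots> = w (int n + 1) + (\<Sum>i\<in>{2..int n}. w i)"
  proof -
    have "{2..int n + 1} = insert (int n + 1) {2..int n}" using assms(1) by auto
    then show ?thesis by simp
  qed
  also have "\<dots> = w 1 + (\<Sum>i\<in>{2..int n}. w i) + int n"
    using assms(2)[rule_format, of 1] by (simp add: add.commute)
  also have "w 1 + (\<Sum>i\<in>{2..int n}. w i) = window_sum n w"
  proof -
    have "{1..int n} = insert 1 {2..int n}" using assms(1) by auto
    then show ?thesis unfolding window_sum_def by simp
  qed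
  finally show ?thesis .
qed

section \<open>Shi's inversion number\<close>

definition pair_inversions :: "nat \<Rightarrow> int \<Rightarrow> int" where
  "pair_inversions n d = \<bar>d div int n\<bar>"

lemma pair_inversions_uminus:
  assumes "n > 0" "\<not> int n dvd d"
  shows "pair_inversions n (- d) = pair_inversions n d + (if d < 0 then -1 else 1)"
proof -
  have "(- d) div int n = - (d div int n) - 1"
    using assms by (simp add: zdiv_zminus1_eq_if dvd_eq_mod_eq_0)
  moreover have "d < 0 \<longleftrightarrow> d div int n < 0" using assms by (simp add: pos_imp_zdiv_neg_iff)
  ultimately show ?thesis unfolding pair_inversions_def by auto
qed

lemma pair_inversions_add_period:
  assumes "n > 0" "\<not> int n dvd d"
  shows "pair_inversions n (d + int n) = pair_inversions n (- d)"
proof -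
  have "(- d) div int n = - (d div int n) - 1"
    using assms by (simp add: zdiv_zminus1_eq_if dvd_eq_mod_eq_0)
  moreover have "(d + int n) div int n = d div int n + 1" using assms by (simp add: div_add_self2)
  ultimately show ?thesis unfolding pair_inversions_def by auto
qed

definition window_pairs :: "int \<Rightarrow> (int \<times> int) set" where
  "window_pairs m = {(i, j). 1 \<le> i \<and> i < j \<and> j \<le> m}"

lemma finite_window_pairs: "finite (window_pairs m)"
  by (rule finite_subset[of _ "{1..m} \<times> {1..m}"]) (auto simp: window_pairs_def)

definition inversion_number :: "nat \<Rightarrow> (int \<Rightarrow> int) \<Rightarrow> int" where
  "inversion_number n w = (\<Sum>(i, j)\<in>window_pairs (int n). pair_inversions n (w j - w i))"

lemma inversion_number_nonneg: "inversion_number n w \<ge> 0"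
  unfolding inversion_number_def pair_inversions_def by (rule sum_nonneg) auto

lemma inversion_number_id: "inversion_number n id = 0"
  unfolding inversion_number_def pair_inversions_def
  by (rule sum.neutral) (auto simp: window_pairs_def)

lemma inversion_number_comp_affine_gen_window:
  assumes n: "n \<ge> 2" and w: "periodic_inj n w" and k: "1 \<le> k" "k < n"
  shows "inversion_number n (w \<circ> affine_gen n k)
    = inversion_number n w + (if w (int k + 1) < w (int k) then -1 else 1)"
proof -
  define K where "K = int k"
  have K: "1 \<le> K" "K + 1 \<le> int n" using k unfolding K_def by auto
  define \<tau> where "\<tau> i = (if i = K then K + 1 else if i = K + 1 then K else i)" for i
  define f where "f = (\<lambda>(i, j). pair_inversions n (w j - w i))"
  define Q where "Q = window_pairs (int n) - {(K, K + 1)}"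
  have on_window: "(w \<circ> affine_gen n k) i = w (\<tau> i)" if "i \<in> {1..int n}" for i
    using affine_gen_window[OF n k that] unfolding \<tau>_def K_def by auto
  have pairs: "window_pairs (int n) = insert (K, K + 1) Q" "(K, K + 1) \<notin> Q" "finite Q"
    using k finite_window_pairs unfolding Q_def window_pairs_def K_def by auto
  have "inversion_number n (w \<circ> affine_gen n k) = (\<Sum>(i, j)\<in>window_pairs (int n). f (\<tau> i, \<tau> j))"
    unfolding inversion_number_def f_def
    by (rule sum.cong) (auto simp: window_pairs_def on_window simp del: comp_apply)
  also have "\<dots> = f (K + 1, K) + (\<Sum>(i, j)\<in>Q. f (\<tau> i, \<tau> j))"
    unfolding pairs(1) using pairs(2,3) by (simp add: \<tau>_def)
  also have "(\<Sum>(i, j)\<in>Q. f (\<tau> i, \<tau> j)) = sum f Q"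
    by (rule sum.reindex_bij_witness[where i = "\<lambda>(a, b). (\<tau> a, \<tau> b)" and j = "\<lambda>(a, b). (\<tau> a, \<tau> b)"])
       (use K in \<open>auto simp: Q_def window_pairs_def \<tau>_def split: if_splits\<close>)
  finally have swapped: "inversion_number n (w \<circ> affine_gen n k) = f (K + 1, K) + sum f Q" .
  have "inversion_number n w = f (K, K + 1) + sum f Q"
    unfolding inversion_number_def f_def[symmetric] pairs(1) using pairs(2,3) by simp
  moreover have "\<not> int n dvd (w (K + 1) - w K)"
    using periodic_inj_window_not_dvd[OF w, of K "K + 1"] k unfolding K_def by auto
  ultimately show ?thesis
    using swapped pair_inversions_uminus[of n "w (K + 1) - w K"] n
    unfolding f_def K_def by auto
qed

lemma inversion_number_shift:
  assumes n: "n \<ge> 2" and w: "periodic_inj n w"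
  shows "inversion_number n (\<lambda>i. w (i + 1)) = inversion_number n w"
proof -
  define N where "N = int n"
  define f where "f = (\<lambda>(i, j). pair_inversions n (w j - w i))"
  define \<sigma> where "\<sigma> = (\<lambda>(i, j). if j = N then (1, i + 1) else (i + 1, j + 1))"
  define \<rho> where "\<rho> = (\<lambda>(a, b). if a = 1 then (b - 1, N) else (a - 1, b - 1))"
  have wrap: "pair_inversions n (w (N + 1) - w (i + 1)) = pair_inversions n (w (i + 1) - w 1)"
    if "1 \<le> i" "i < N" for i
  proof -
    have "w (N + 1) = w 1 + N" using w unfolding periodic_inj_def N_def by (metis add.commute)
    moreover have "\<not> int n dvd (w 1 - w (i + 1))"
      using periodic_inj_window_not_dvd[OF w, of "i + 1" 1] that unfolding N_def by auto
    ultimately show ?thesis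
      using pair_inversions_add_period[of n "w 1 - w (i + 1)"] n unfolding N_def
      by (simp add: algebra_simps)
  qed
  have "inversion_number n (\<lambda>i. w (i + 1)) = (\<Sum>p\<in>window_pairs N. f (\<sigma> p))"
    unfolding inversion_number_def N_def[symmetric]
    by (rule sum.cong) (auto simp: f_def \<sigma>_def window_pairs_def wrap)
  also have "\<dots> = sum f (window_pairs N)"
    by (rule sum.reindex_bij_witness[where i = \<rho> and j = \<sigma>])
       (auto simp: \<sigma>_def \<rho>_def window_pairs_def split: if_splits)
  finally show ?thesis unfolding inversion_number_def N_def f_def .
qed

lemma inversion_number_comp_affine_gen:
  assumes n: "n \<ge> 2" and w: "periodic_inj n w" and k: "k < n"
  shows "inversion_number n (w \<circ> affine_gen n k)
    = inversion_number n w + (if w (int k + 1) < w (int k) then -1 else 1)"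
proof (cases "k = 0")
  case False
  then show ?thesis using inversion_number_comp_affine_gen_window[OF n w _ k] by simp
next
  case True
  define v where "v = (\<lambda>i. w (i + 1))"
  have v: "periodic_inj n v" unfolding v_def by (rule periodic_inj_shift[OF w])
  have last: "1 \<le> n - 1" "n - 1 < n" "int (n - 1) = int n - 1" using n by auto
  have "inversion_number n (w \<circ> affine_gen n 0)
      = inversion_number n (\<lambda>i. (w \<circ> affine_gen n 0) (i + 1))"
    using inversion_number_shift[OF n periodic_inj_comp_affine_gen[OF n _ w]] n by simp
  also have "\<dots> = inversion_number n (v \<circ> affine_gen n (n - 1))"
    unfolding v_def comp_affine_gen_zero_shift[OF n] ..
  also have "\<dots> = inversion_number n v + (if v (int (n - 1) + 1) < v (int (n - 1)) then -1 else 1)"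
    by (rule inversion_number_comp_affine_gen_window[OF n v last(1,2)])
  also have "inversion_number n v = inversion_number n w"
    unfolding v_def by (rule inversion_number_shift[OF n w])
  finally show ?thesis
    using True periodic_inj_values_around_window[OF w] unfolding v_def last(3) by (simp add: comp_def)
qed

lemma window_sum_comp_affine_gen:
  assumes n: "n \<ge> 2" and w: "periodic_inj n w" and k: "k < n"
  shows "window_sum n (w \<circ> affine_gen n k) = window_sum n w"
proof (cases "k = 0")
  case False
  then show ?thesis using window_sum_comp_affine_gen_window[OF n _ k] by simp
next
  case True
  define v where "v = (\<lambda>i. w (i + 1))"
  have periodic: "\<forall>i. u (i + int n) = u i + int n" if "periodic_inj n u" for u
    using that unfolding periodic_inj_def by blast
  have last: "1 \<le> n - 1" "n - 1 < n" using n by auto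
  have "window_sum n (w \<circ> affine_gen n 0) + int n
      = window_sum n (\<lambda>i. (w \<circ> affine_gen n 0) (i + 1))"
    using window_sum_shift[OF _ periodic[OF periodic_inj_comp_affine_gen[OF n _ w]], of 0] n
    by (simp add: comp_def)
  also have "\<dots> = window_sum n (v \<circ> affine_gen n (n - 1))"
    unfolding v_def comp_affine_gen_zero_shift[OF n] ..
  also have "\<dots> = window_sum n v"
    by (rule window_sum_comp_affine_gen_window[OF n last])
  also have "\<dots> = window_sum n w + int n"
    unfolding v_def using window_sum_shift periodic[OF w] n by simp
  finally show ?thesis using True by simp
qed

section \<open>The length equals the inversion number\<close>

lemma inversion_number_gen_word_le:
  assumes "n \<ge> 2" "set ks \<subseteq> {0..<n}"
  shows "inversion_number n (gen_word n ks) \<le> int (length ks)"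
  using assms(2)
proof (induct ks rule: rev_induct)
  case Nil
  then show ?case using inversion_number_id by (simp add: gen_word_def id_def)
next
  case (snoc k ks)
  then show ?case
    using inversion_number_comp_affine_gen[OF assms(1) periodic_inj_gen_word[OF assms(1)], of ks k]
    by (simp add: gen_word_snoc del: comp_apply)
qed

lemma adjacent_increasing_add_le:
  fixes f :: "int \<Rightarrow> int"
  assumes "\<And>k. a \<le> k \<Longrightarrow> k < b \<Longrightarrow> f k < f (k + 1)" "a \<le> i" "i \<le> j" "j \<le> b"
  shows "f i + (j - i) \<le> f j"
  using assms(3,4)
proof (induct j rule: int_ge_induct)
  case (step j)
  then have "f i + (j - i) \<le> f j" "f j < f (j + 1)" using assms(1,2) by auto
  then show ?case by linarith
qed simp

lemma inversion_number_eq_0_if_no_descent: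
  assumes n: "n \<ge> 2" and w: "periodic_inj n w" and asc: "\<forall>k<n. \<not> w (int k + 1) < w (int k)"
  shows "inversion_number n w = 0"
proof -
  have inc: "w k < w (k + 1)" if "0 \<le> k" "k < int n" for k
  proof -
    have "nat k < n" using that by linarith
    then have "w k \<le> w (k + 1)" using asc that by force
    moreover have "w k \<noteq> w (k + 1)" using w unfolding periodic_inj_def inj_def by force
    ultimately show ?thesis by simp
  qed
  have "pair_inversions n (w j - w i) = 0" if "(i, j) \<in> window_pairs (int n)" for i j
  proof -
    have ij: "1 \<le> i" "i < j" "j \<le> int n" using that by (auto simp: window_pairs_def)
    have "w i + (j - i) \<le> w j" "w 1 + (i - 1) \<le> w i" "w j + (int n - j) \<le> w (int n)"
      using adjacent_increasing_add_le[of 0 "int n" w, OF inc] ij by auto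
    moreover have "w 0 < w 1" using inc[of 0] n by simp
    moreover have "w (int n) = w 0 + int n" using periodic_inj_values_around_window[OF w] by simp
    ultimately have "0 \<le> w j - w i \<and> w j - w i < int n" using ij by linarith
    then show ?thesis unfolding pair_inversions_def by simp
  qed
  then show ?thesis unfolding inversion_number_def by (intro sum.neutral) auto
qed

lemma window_sum_id: "window_sum n id = int ((n + 1) choose 2)"
  using Sum_Icc_int[of 1 "int n"] unfolding window_sum_def
  by (cases "n = 0") (simp_all add: choose_two zdiv_int algebra_simps)

lemma periodic_inj_eq_id_if_inversion_number_eq_0:
  assumes n: "n \<ge> 2" and w: "periodic_inj n w" and normalized: "window_sum n w = int ((n + 1) choose 2)"
    and inv: "inversion_number n w = 0"
  shows "w = id"
proof -
  have small: "0 \<le> w j - w i \<and> w j - w i < int n" if "(i, j) \<in> window_pairs (int n)" for i j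
  proof -
    have "\<forall>p\<in>window_pairs (int n). (\<lambda>(i, j). pair_inversions n (w j - w i)) p = 0"
      using inv unfolding inversion_number_def
      by (subst (asm) sum_nonneg_eq_0_iff) (auto simp: finite_window_pairs pair_inversions_def)
    then have "(w j - w i) div int n = 0" using that unfolding pair_inversions_def by fastforce
    then show ?thesis using n zdiv_eq_0_iff[of "w j - w i" "int n"] by linarith
  qed
  have inc: "w k < w (k + 1)" if "1 \<le> k" "k < int n" for k
  proof -
    have "w k \<le> w (k + 1)" using small[of k "k + 1"] that by (auto simp: window_pairs_def)
    moreover have "w k \<noteq> w (k + 1)" using w unfolding periodic_inj_def inj_def by force
    ultimately show ?thesis by simp
  qed
  have translate: "w i = i + (w 1 - 1)" if "i \<in> {1..int n}" for i
  proof -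
    have "w 1 + (i - 1) \<le> w i" "w i + (int n - i) \<le> w (int n)"
      using adjacent_increasing_add_le[of 1 "int n" w, OF inc] that by auto
    moreover have "w (int n) - w 1 < int n" using small[of 1 "int n"] n by (auto simp: window_pairs_def)
    ultimately show ?thesis by linarith
  qed
  have "window_sum n w = (\<Sum>i\<in>{1..int n}. i + (w 1 - 1))"
    unfolding window_sum_def by (rule sum.cong) (simp_all only: translate)
  also have "\<dots> = window_sum n id + int n * (w 1 - 1)"
    unfolding window_sum_def by (simp add: sum.distrib)
  finally have "window_sum n w = window_sum n id + int n * (w 1 - 1)" .
  then have "w 1 = 1" using normalized window_sum_id[of n] n by simp
  then have on_window: "w r = r" if "r \<in> {1..int n}" for r using translate[OF that] by simp
  show ?thesis
  proof
    fix y
    obtain r m where "r \<in> {1..int n}" "y = r + m * int n" using window_decomposition[of n y] n by auto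
    then show "w y = id y"
      using periodic_add_mult[of w n r m] w on_window unfolding periodic_inj_def by simp
  qed
qed

lemma gen_word_of_inversion_number:
  assumes n: "n \<ge> 2"
  shows "periodic_inj n w \<Longrightarrow> window_sum n w = int ((n + 1) choose 2)
    \<Longrightarrow> inversion_number n w = int m
    \<Longrightarrow> \<exists>ks. length ks = m \<and> set ks \<subseteq> {0..<n} \<and> gen_word n ks = w"
proof (induct m arbitrary: w)
  case 0
  then have "w = id" using periodic_inj_eq_id_if_inversion_number_eq_0[OF n] by simp
  then show ?case by (intro exI[of _ "[]"]) (simp add: gen_word_def)
next
  case (Suc m)
  obtain k where k: "k < n" "w (int k + 1) < w (int k)"
    using inversion_number_eq_0_if_no_descent[OF n Suc.prems(1)] Suc.prems(3) by auto
  define v where "v = w \<circ> affine_gen n k"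
  have "periodic_inj n v" "window_sum n v = int ((n + 1) choose 2)" "inversion_number n v = int m"
    using Suc.prems k periodic_inj_comp_affine_gen[OF n k(1)] window_sum_comp_affine_gen[OF n _ k(1)]
      inversion_number_comp_affine_gen[OF n _ k(1)]
    unfolding v_def by auto
  then obtain ks where ks: "length ks = m" "set ks \<subseteq> {0..<n}" "gen_word n ks = v"
    using Suc.hyps by blast
  have "gen_word n (ks @ [k]) = w"
    unfolding gen_word_snoc ks(3) v_def by (auto simp: affine_gen_involution[OF n k(1)])
  then show ?case using ks k by (intro exI[of _ "ks @ [k]"]) auto
qed

lemma coxeter_length_eq_inversion_number:
  assumes n: "n \<ge> 2" and w: "affine_perm n w"
  shows "int (coxeter_length n w) = inversion_number n w"
proof -
  obtain m where m: "inversion_number n w = int m"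
    using inversion_number_nonneg nonneg_int_cases by metis
  have "periodic_inj n w" "window_sum n w = int ((n + 1) choose 2)"
    using w unfolding affine_perm_def periodic_inj_def window_sum_def by (auto simp: bij_is_inj)
  then obtain ks where "length ks = m" "set ks \<subseteq> {0..<n}" "gen_word n ks = w"
    using gen_word_of_inversion_number[OF n _ _ m] by blast
  then have "coxeter_length n w = m"
    unfolding coxeter_length_def
  proof (intro Least_equality exI conjI)
    fix l assume "\<exists>ks. length ks = l \<and> set ks \<subseteq> {0..<n} \<and> gen_word n ks = w"
    then show "m \<le> l" using inversion_number_gen_word_le[OF n] m by fastforce
  qed
  then show ?thesis using m by simp
qed

section \<open>Gaps of affine Grassmannian elements\<close>

lemma card_congruent_between:
  assumes "n > 0" "a < b" "\<not> int n dvd (b - a)"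
  shows "int (card {x. a < x \<and> x < b \<and> int n dvd (x - a)}) = (b - a) div int n"
proof -
  define q where "q = (b - a) div int n"
  have q: "0 \<le> q" "b - a = q * int n + (b - a) mod int n"
    using assms unfolding q_def by (simp_all add: pos_imp_zdiv_nonneg_iff)
  have r: "0 < (b - a) mod int n" "(b - a) mod int n < int n"
    using assms by (simp_all add: dvd_eq_mod_eq_0 order_le_neq_trans)
  have set: "{x. a < x \<and> x < b \<and> int n dvd (x - a)} = (\<lambda>m. a + m * int n) ` {1..q}"
  proof (intro set_eqI iffI)
    fix x assume x: "x \<in> {x. a < x \<and> x < b \<and> int n dvd (x - a)}"
    then obtain m where m: "x = a + m * int n" by (auto simp: dvd_def algebra_simps)
    have "0 < m * int n" "m * int n < (q + 1) * int n" using x m q r by (auto simp: algebra_simps)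
    then have "m \<in> {1..q}" using assms(1) by (simp add: zero_less_mult_iff mult_less_cancel_right)
    then show "x \<in> (\<lambda>m. a + m * int n) ` {1..q}" using m by blast
  next
    fix x assume "x \<in> (\<lambda>m. a + m * int n) ` {1..q}"
    then obtain m where m: "1 \<le> m" "m \<le> q" "x = a + m * int n" by auto
    have "1 * int n \<le> m * int n" "m * int n \<le> q * int n"
      using m by (intro mult_right_mono; simp)+
    then have "a < x" "x < b" using m q r assms(1) by linarith+
    then show "x \<in> {x. a < x \<and> x < b \<and> int n dvd (x - a)}" using m by simp
  qed
  have inj: "inj_on (\<lambda>m. a + m * int n) {1..q}" using assms(1) by (auto simp: inj_on_def)
  show ?thesis unfolding set card_image[OF inj] using q(1) by (simp add: q_def)
qed

lemma sum_window_pairs_extend: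
  assumes "0 \<le> m"
  shows "(\<Sum>p\<in>window_pairs (m + 1). f p) = (\<Sum>p\<in>window_pairs m. f p) + (\<Sum>k\<in>{1..m}. f (k, m + 1))"
proof -
  have "window_pairs (m + 1) = window_pairs m \<union> (\<lambda>k. (k, m + 1)) ` {1..m}"
    "window_pairs m \<inter> (\<lambda>k. (k, m + 1)) ` {1..m} = {}"
    unfolding window_pairs_def by auto
  moreover have "inj_on (\<lambda>k. (k, m + 1)) {1..m}" by (auto simp: inj_on_def)
  ultimately show ?thesis by (simp add: sum.union_disjoint finite_window_pairs sum.reindex)
qed

lemma sum_weighted_Suc:
  "(\<Sum>i=1..m. (m + 1 - i) * g i) + (\<Sum>i=1..Suc m. g i) = (\<Sum>i=1..Suc m. (Suc m + 1 - i) * (g i :: nat))"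
proof -
  have "(\<Sum>i=1..Suc m. (Suc m + 1 - i) * g i) = (\<Sum>i=1..Suc m. (m + 1 - i) * g i + g i)"
    by (rule sum.cong) (auto simp: Suc_diff_le)
  also have "\<dots> = (\<Sum>i=1..m. (m + 1 - i) * g i) + (\<Sum>i=1..Suc m. g i)"
    by (simp add: sum.distrib)
  finally show ?thesis by simp
qed

definition gaps_between :: "nat \<Rightarrow> (int \<Rightarrow> int) \<Rightarrow> int \<Rightarrow> int \<Rightarrow> int set" where
  "gaps_between n w a b = {x. a < x \<and> x < b \<and> \<not> is_bead n w x}"

lemma finite_gaps_between: "finite (gaps_between n w a b)"
  by (rule finite_subset[of _ "{a<..<b}"]) (auto simp: gaps_between_def)

lemma gap_count_eq_card_gaps_between: "gap_count n w i = card (gaps_between n w (w (int i)) (w (int i + 1)))"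
  unfolding gap_count_def gaps_between_def ..

locale affine_grassmannian =
  fixes n :: nat and w :: "int \<Rightarrow> int"
  assumes n: "n \<ge> 2" and grass: "affine_grass n w"
begin

lemma periodic: "periodic_inj n w"
  using grass unfolding affine_grass_def affine_perm_def periodic_inj_def by (auto simp: bij_is_inj)

lemma window_less: "1 \<le> i \<Longrightarrow> i < j \<Longrightarrow> j \<le> int n \<Longrightarrow> w i < w j"
  using adjacent_increasing_add_le[of 1 "int n" w i j] grass unfolding affine_grass_def by auto

lemma window_congruent_exists: "\<exists>r\<in>{1..int n}. int n dvd (x - w r)"
proof -
  obtain y where "w y = x"
    using grass unfolding affine_grass_def affine_perm_def by (metis bij_pointE)
  moreover obtain r m where "r \<in> {1..int n}" "y = r + m * int n"
    using window_decomposition[of n y] n by auto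
  ultimately have "x - w r = m * int n" "r \<in> {1..int n}"
    using periodic periodic_add_mult[of w n r m] unfolding periodic_inj_def by auto
  then show ?thesis by (intro bexI[of _ r]) simp_all
qed

lemma window_congruent_unique:
  assumes "i \<in> {1..int n}" "j \<in> {1..int n}" "int n dvd (x - w i)" "int n dvd (x - w j)"
  shows "i = j"
proof (rule ccontr)
  assume "i \<noteq> j"
  moreover have "int n dvd (w j - w i)" using dvd_diff[OF assms(3,4)] by simp
  ultimately show False using periodic_inj_window_not_dvd[OF periodic] assms(1,2) by blast
qed

lemma is_bead_iff: "is_bead n w x \<longleftrightarrow> (\<exists>j\<in>{1..int n}. int n dvd (x - w j) \<and> x \<le> w j)"
proof
  assume "is_bead n w x"
  then obtain j m where "j \<in> {1..int n}" "m \<ge> 0" "x = w j - m * int n"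
    unfolding is_bead_def by blast
  then show "\<exists>j\<in>{1..int n}. int n dvd (x - w j) \<and> x \<le> w j"
    by (intro bexI[of _ j]) simp_all
next
  assume "\<exists>j\<in>{1..int n}. int n dvd (x - w j) \<and> x \<le> w j"
  then obtain j m where j: "j \<in> {1..int n}" "x - w j = int n * m" "x \<le> w j" by (auto simp: dvd_def)
  then have "int n * m \<le> 0" by simp
  then have "m \<le> 0" using n by (simp add: mult_le_0_iff)
  then show "is_bead n w x"
    unfolding is_bead_def using j by (intro bexI[of _ j] exI[of _ "- m"]) (auto simp: algebra_simps)
qed

lemma gaps_between_first_eq_Union:
  assumes "1 \<le> j" "j \<le> int n"
  shows "gaps_between n w (w 1) (w j) = (\<Union>k\<in>{1..<j}. {x. w k < x \<and> x < w j \<and> int n dvd (x - w k)})"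
proof (intro set_eqI iffI)
  fix x assume "x \<in> gaps_between n w (w 1) (w j)"
  then have x: "w 1 < x" "x < w j" "\<not> is_bead n w x" unfolding gaps_between_def by auto
  obtain r where r: "r \<in> {1..int n}" "int n dvd (x - w r)" using window_congruent_exists by blast
  then have "w r < x" using x(3) unfolding is_bead_iff by force
  have "r < j"
  proof (rule ccontr)
    assume "\<not> r < j"
    then have "w j \<le> w r" using window_less[of j r] r(1) assms by (cases "r = j") auto
    then show False using \<open>w r < x\<close> x(2) by simp
  qed
  then show "x \<in> (\<Union>k\<in>{1..<j}. {x. w k < x \<and> x < w j \<and> int n dvd (x - w k)})"
    using r x \<open>w r < x\<close> by auto
next
  fix x assume "x \<in> (\<Union>k\<in>{1..<j}. {x. w k < x \<and> x < w j \<and> int n dvd (x - w k)})"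
  then obtain k where k: "k \<in> {1..<j}" "w k < x" "x < w j" "int n dvd (x - w k)" by auto
  have "w 1 \<le> w k" using window_less[of 1 k] k(1) assms by (cases "k = 1") auto
  moreover have "\<not> is_bead n w x"
    unfolding is_bead_iff using window_congruent_unique[of _ k x] k assms by force
  ultimately show "x \<in> gaps_between n w (w 1) (w j)" unfolding gaps_between_def using k by auto
qed

lemma card_gaps_between_first:
  assumes "1 \<le> j" "j \<le> int n"
  shows "int (card (gaps_between n w (w 1) (w j))) = (\<Sum>k\<in>{1..<j}. (w j - w k) div int n)"
proof -
  let ?C = "\<lambda>k. {x. w k < x \<and> x < w j \<and> int n dvd (x - w k)}"
  have card: "int (card (?C k)) = (w j - w k) div int n" if "k \<in> {1..<j}" for k
    using card_congruent_between[of n "w k" "w j"] window_less[of k j]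
      periodic_inj_window_not_dvd[OF periodic, of k j] that assms n by auto
  have "finite (?C k)" for k by (rule finite_subset[of _ "{w k<..<w j}"]) auto
  moreover have "?C k \<inter> ?C k' = {}" if "k \<in> {1..<j}" "k' \<in> {1..<j}" "k \<noteq> k'" for k k'
    using window_congruent_unique[of k k'] that assms by auto
  ultimately have "card (\<Union>k\<in>{1..<j}. ?C k) = (\<Sum>k\<in>{1..<j}. card (?C k))"
    by (intro card_UN_disjoint) auto
  then show ?thesis unfolding gaps_between_first_eq_Union[OF assms] using card by simp
qed

lemma sum_pair_inversions_column:
  assumes "1 \<le> j" "j \<le> int n"
  shows "(\<Sum>k\<in>{1..<j}. pair_inversions n (w j - w k)) = int (card (gaps_between n w (w 1) (w j)))"
proof -
  have "pair_inversions n (w j - w k) = (w j - w k) div int n" if "k \<in> {1..<j}" for k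
    using window_less[of k j] assms n that by (simp add: pair_inversions_def pos_imp_zdiv_nonneg_iff)
  then show ?thesis using card_gaps_between_first[OF assms] by simp
qed

lemma card_gaps_between_first_eq_sum_gap_count:
  "m \<le> n - 1 \<Longrightarrow> card (gaps_between n w (w 1) (w (int m + 1))) = (\<Sum>i=1..m. gap_count n w i)"
proof (induct m)
  case 0
  have "gaps_between n w (w 1) (w 1) = {}" unfolding gaps_between_def by auto
  then show ?case by simp
next
  case (Suc m)
  define M where "M = int m + 1"
  have M: "1 \<le> M" "M + 1 \<le> int n" using Suc.prems n unfolding M_def by auto
  have "is_bead n w (w M)" unfolding is_bead_def using M by (intro bexI[of _ M] exI[of _ 0]) auto
  then have "x < w M \<or> w M < x" if "\<not> is_bead n w x" for x using that by (metis linorder_neqE)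
  moreover have "w 1 \<le> w M" using window_less[of 1 M] M by (cases "M = 1") auto
  moreover have "w M < w (M + 1)" using window_less[of M "M + 1"] M by simp
  ultimately have "gaps_between n w (w 1) (w (M + 1))
      = gaps_between n w (w 1) (w M) \<union> gaps_between n w (w M) (w (M + 1))"
    "gaps_between n w (w 1) (w M) \<inter> gaps_between n w (w M) (w (M + 1)) = {}"
    unfolding gaps_between_def by auto
  then have "card (gaps_between n w (w 1) (w (M + 1)))
      = card (gaps_between n w (w 1) (w M)) + gap_count n w (Suc m)"
    by (simp add: card_Un_disjoint finite_gaps_between gap_count_eq_card_gaps_between M_def add.commute)
  then show ?case using Suc unfolding M_def by (simp add: add.commute)
qed

lemma sum_window_pairs_pair_inversions:
  "m \<le> n - 1 \<Longrightarrow> (\<Sum>(i, j)\<in>window_pairs (int m + 1). pair_inversions n (w j - w i))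
    = int (\<Sum>i=1..m. (m + 1 - i) * gap_count n w i)"
proof (induct m)
  case 0
  have "window_pairs 1 = {}" unfolding window_pairs_def by auto
  then show ?case by simp
next
  case (Suc m)
  define M where "M = int m + 1"
  have M: "1 \<le> M" "M + 1 \<le> int n" using Suc.prems n unfolding M_def by auto
  have "{1..M} = {1..<M + 1}" by auto
  then have new_column: "(\<Sum>k\<in>{1..M}. pair_inversions n (w (M + 1) - w k))
      = int (\<Sum>i=1..Suc m. gap_count n w i)"
    using sum_pair_inversions_column[of "M + 1"] card_gaps_between_first_eq_sum_gap_count[of "Suc m"]
      Suc.prems M unfolding M_def by simp
  have "(\<Sum>(i, j)\<in>window_pairs (M + 1). pair_inversions n (w j - w i))
      = (\<Sum>(i, j)\<in>window_pairs M. pair_inversions n (w j - w i))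
        + (\<Sum>k\<in>{1..M}. pair_inversions n (w (M + 1) - w k))"
    using sum_window_pairs_extend[of M "\<lambda>(i, j). pair_inversions n (w j - w i)"] M by simp
  also have "\<dots> = int (\<Sum>i=1..m. (m + 1 - i) * gap_count n w i) + int (\<Sum>i=1..Suc m. gap_count n w i)"
    using Suc new_column unfolding M_def by simp
  also have "\<dots> = int (\<Sum>i=1..Suc m. (Suc m + 1 - i) * gap_count n w i)"
    by (simp only: of_nat_add[symmetric] sum_weighted_Suc)
  moreover have "int (Suc m) + 1 = M + 1" unfolding M_def by simp
  ultimately show ?case by (simp only:)
qed

lemma inversion_number_eq_weighted_gap_sum:
  "inversion_number n w = int (\<Sum>i=1..n-1. (n - i) * gap_count n w i)"
  using sum_window_pairs_pair_inversions[of "n - 1"] n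
  unfolding inversion_number_def by simp

end

theorem mainTheorem1:
  fixes n :: nat and w :: "int \<Rightarrow> int"
  assumes "n \<ge> 2" and "affine_grass n w"
  shows "coxeter_length n w = (\<Sum>i=1..n-1. (n - i) * gap_count n w i)"
proof -
  interpret affine_grassmannian n w using assms by unfold_locales
  have "int (coxeter_length n w) = inversion_number n w"
    using coxeter_length_eq_inversion_number assms unfolding affine_grass_def by blast
  also have "\<dots> = int (\<Sum>i=1..n-1. (n - i) * gap_count n w i)"
    by (rule inversion_number_eq_weighted_gap_sum)
  finally show ?thesis by (simp only: of_nat_eq_iff)
qed

end
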